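(* Let $(X,A,Y)$ be jointly distributed with $A,Y\in\{0,1\}$, and assume there exist deterministic functions $f_Y^*,f_A^*$ with $Y=f_Y^*(X)$ and $A=f_A^*(X)$. Let $\Delta_{Y\mid A}:=|\Pr(Y=1\mid A=0)-\Pr(Y=1\mid A=1)|$ and let $\ell(y,y')=-y\log y'-(1-y)\log(1-y')$ be the cross-entropy loss. Let $Z=g(X)$ be any (possibly randomized) representation. If $I(Z;A)=0$, then $$\inf_h\mathbb{E}[\ell(Y,h(Z))]\ge \Delta_{Y\mid A}\cdot H(A).$$ If $I(Y;Z)=H(Y)$, then $$\inf_h\mathbb{E}[\ell(A,h(Z))]\le H(A\mid Y).$$ Here the infima are over all (possibly randomized) predictors $h$ mapping $Z$ to $[0,1]$.
   Context: A (possibly randomized) representation is $Z=g(X,S)$ for a measurable $g$ and auxiliary randomness $S$ independent of $(X,A,Y)$. $H$ denotes Shannon entropy (with the same logarithm base as in $\ell$), $I$ mutual information. *)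

theory Defs
  imports "HOL-Probability.Probability"
begin

text \<open>Values are in ennreal so that log 0 = -infinity is treated correctly
  (with the convention 0 * log 0 = 0).\<close>
definition ce_loss :: "real \<Rightarrow> bool \<Rightarrow> real \<Rightarrow> ennreal" where
  "ce_loss b y t =
     (if y then (if t \<le> 0 then \<infinity> else ennreal (- log b t))
      else (if 1 \<le> t then \<infinity> else ennreal (- log b (1 - t))))"

text \<open>(Possibly randomized) predictors from Z to [0,1]: Markov kernels from the
  space of Z to probability measures on the reals concentrated on [0,1].
  Deterministic predictors are the Dirac kernels.\<close>
definition rand_predictors :: "'z measure \<Rightarrow> ('z \<Rightarrow> real measure) set" where
  "rand_predictors MZ =
     {h. h \<in> MZ \<rightarrow>\<^sub>M subprob_algebra borel \<and>
         (\<forall>z\<in>space MZ. prob_space (h z) \<and> emeasure (h z) {0..1} = 1)}"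

definition exp_loss ::
  "'w measure \<Rightarrow> real \<Rightarrow> ('w \<Rightarrow> bool) \<Rightarrow> ('w \<Rightarrow> 'z) \<Rightarrow> ('z \<Rightarrow> real measure) \<Rightarrow> ennreal" where
  "exp_loss M b L Z h = (\<integral>\<^sup>+ \<omega>. (\<integral>\<^sup>+ t. ce_loss b (L \<omega>) t \<partial>(h (Z \<omega>))) \<partial>M)"

definition Delta_YA :: "'w measure \<Rightarrow> ('w \<Rightarrow> bool) \<Rightarrow> ('w \<Rightarrow> bool) \<Rightarrow> real" where
  "Delta_YA M A Y = \<bar>cond_prob M (\<lambda>\<omega>. Y \<omega>) (\<lambda>\<omega>. \<not> A \<omega>) - cond_prob M (\<lambda>\<omega>. Y \<omega>) (\<lambda>\<omega>. A \<omega>)\<bar>"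

end

theory Submission
  imports Defs
begin

text \<open>
  Write \<open>p = P(A)\<close> and \<open>r(z) = P(A | Z = z)\<close>. The joint law of \<open>(Z, A)\<close> has the density
  \<open>P(A = a | Z = z) / P(A = a)\<close> with respect to the product of the marginals. Hence
  \<open>I(Z; A) = 0\<close> forces this density to be 1, i.e. \<open>Z\<close> and \<open>A\<close> are independent, and in general
  \<open>I(A; Z) = H(A) - E h(r(Z))\<close> with \<open>h\<close> the binary entropy.

  Lower bound: by Gibbs' inequality the expected losses \<open>u(z)\<close>, \<open>v(z)\<close> of a predictor at the
  labels 1 and 0 satisfy \<open>H(A) \<le> p u(z) + (1 - p) v(z)\<close>. Truncating \<open>u\<close> at \<open>v + H(A)/p\<close> and \<open>v\<close>
  at \<open>u + H(A)/(1 - p)\<close> keeps this bound; integrating it against the indicator of \<open>A\<close>, which is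
  independent of \<open>Z\<close>, bounds the loss for \<open>Y\<close> from below by \<open>H(A) (P(Y | A) - P(Y | \<not> A))\<close>,
  and exchanging \<open>A\<close> with \<open>\<not> A\<close> gives the other sign.

  Upper bound: \<open>I(Y; Z) = H(Y)\<close> gives \<open>h(r(Z)) = 0\<close> almost surely, so \<open>Y\<close> is almost surely a
  function of \<open>Z\<close>, and predicting \<open>P(A | Y)\<close> through that function attains \<open>H(A | Y)\<close>.

  Neither bound uses that \<open>A\<close> and \<open>Y\<close> are functions of \<open>X\<close> or that \<open>S\<close> is independent of
  \<open>(X, A, Y)\<close>; only measurability of \<open>A\<close>, \<open>Y\<close> and \<open>Z\<close> is needed.
\<close>

section \<open>Binary entropy\<close>

definition bin_entropy :: "real \<Rightarrow> real \<Rightarrow> real" where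
  "bin_entropy b x = - (x * log b x + (1 - x) * log b (1 - x))"

lemma bin_entropy_1_minus: "bin_entropy b (1 - x) = bin_entropy b x"
  by (simp add: bin_entropy_def)

lemma bin_entropy_nonneg:
  assumes "1 < b" "0 \<le> x" "x \<le> 1"
  shows "0 \<le> bin_entropy b x"
proof -
  have "x * log b x \<le> 0" "(1 - x) * log b (1 - x) \<le> 0"
    using assms by (cases "x = 0"; cases "x = 1"; auto intro!: mult_nonneg_nonpos)+
  then show ?thesis by (simp add: bin_entropy_def)
qed

lemma bin_entropy_pos:
  assumes "1 < b" "0 < x" "x < 1"
  shows "0 < bin_entropy b x"
proof -
  have "x * log b x < 0" "(1 - x) * log b (1 - x) < 0"
    using assms by (simp_all add: mult_pos_neg)
  then show ?thesis by (simp add: bin_entropy_def)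
qed

lemma neg_mult_ln_le:
  fixes x :: real
  assumes "0 \<le> x"
  shows "- (x * ln x) \<le> 1 - x"
proof (cases "x = 0")
  case False
  then have "- ln x \<le> 1 / x - 1" using ln_le_minus_one[of "1 / x"] assms by (simp add: ln_div)
  then have "x * - ln x \<le> x * (1 / x - 1)" using assms by (rule mult_left_mono)
  also have "\<dots> = 1 - x" using False by (simp add: field_simps)
  finally show ?thesis by simp
qed simp

lemma bin_entropy_le:
  assumes b: "1 < b" and x: "0 \<le> x" "x \<le> 1"
  shows "bin_entropy b x \<le> 1 / ln b"
proof -
  have "- (x * ln x + (1 - x) * ln (1 - x)) \<le> 1"
    using neg_mult_ln_le[of x] neg_mult_ln_le[of "1 - x"] x by simp
  then show ?thesis
    using b by (simp add: bin_entropy_def log_def divide_right_mono add_divide_distrib[symmetric]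
        minus_divide_left)
qed

lemma abs_mult_log_le:
  fixes x b :: real
  assumes x: "0 \<le> x" and b: "1 < b"
  shows "\<bar>x * log b x\<bar> \<le> (1 + x\<^sup>2) / ln b"
proof -
  have "x * ln x \<le> x * (x - 1)"
    using ln_le_minus_one[of x] x by (cases "x = 0") (simp_all add: mult_left_mono)
  then have "x * ln x \<le> x\<^sup>2 - x" by (simp add: power2_eq_square algebra_simps)
  then have "\<bar>x * ln x\<bar> \<le> 1 + x\<^sup>2"
    using neg_mult_ln_le[OF x] x zero_le_power2[of x] by linarith
  then show ?thesis
    using b by (simp add: log_def abs_mult abs_div divide_right_mono)
qed

lemma mult_ln_div_le:
  fixes x y :: real
  assumes "0 < x" "0 < y"
  shows "x * ln (y / x) \<le> y - x"
proof -
  have "x * ln (y / x) \<le> x * (y / x - 1)"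
    by (rule mult_left_mono[OF ln_le_minus_one]) (use assms in auto)
  also have "\<dots> = y - x" using assms by (simp add: right_diff_distrib)
  finally show ?thesis .
qed

lemma bin_entropy_le_cross_entropy:
  fixes p t b :: real
  assumes p: "0 < p" "p < 1" and t: "0 < t" "t < 1" and b: "1 < b"
  shows "bin_entropy b p \<le> p * - log b t + (1 - p) * - log b (1 - t)"
proof -
  have e: "ln (t / p) = ln t - ln p" "ln ((1 - t) / (1 - p)) = ln (1 - t) - ln (1 - p)"
    using p t by (simp_all add: ln_div)
  have "p * (ln t - ln p) \<le> t - p"
    by (rule mult_ln_div_le[of p t, unfolded e]) (use p t in simp_all)
  moreover have "(1 - p) * (ln (1 - t) - ln (1 - p)) \<le> (1 - t) - (1 - p)"
    by (rule mult_ln_div_le[of "1 - p" "1 - t", unfolded e]) (use p t in simp_all)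
  ultimately have "- (p * ln p + (1 - p) * ln (1 - p)) \<le> p * - ln t + (1 - p) * - ln (1 - t)"
    unfolding right_diff_distrib mult_minus_right by linarith
  then have "- (p * ln p + (1 - p) * ln (1 - p)) / ln b \<le> (p * - ln t + (1 - p) * - ln (1 - t)) / ln b"
    using b by (simp add: divide_right_mono)
  then show ?thesis
    by (simp only: bin_entropy_def log_def mult_minus_right times_divide_eq_right
        minus_divide_left add_divide_distrib[symmetric])
qed

lemma xlogx_divide:
  fixes x c b :: real
  assumes "0 \<le> x" "0 < c"
  shows "c * (x / c * log b (x / c)) = x * log b x - x * log b c"
proof (cases "x = 0")
  case False
  with assms show ?thesis by (simp add: log_divide_pos algebra_simps)
qed simp

lemma bin_entropy_le_ce_loss:
  assumes p: "0 < p" "p < 1" and b: "1 < b"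
  shows "ennreal (bin_entropy b p) \<le> ennreal p * ce_loss b True t + ennreal (1 - p) * ce_loss b False t"
proof (cases "0 < t \<and> t < 1")
  case True
  then have "0 \<le> - log b t" "0 \<le> - log b (1 - t)" using b by simp_all
  then have "ennreal p * ce_loss b True t + ennreal (1 - p) * ce_loss b False t
      = ennreal (p * - log b t) + ennreal ((1 - p) * - log b (1 - t))"
    using True by (simp add: ce_loss_def ennreal_mult''[symmetric] del: mult_minus_right)
  also have "\<dots> = ennreal (p * - log b t + (1 - p) * - log b (1 - t))"
    using p \<open>0 \<le> - log b t\<close> \<open>0 \<le> - log b (1 - t)\<close>
    by (intro ennreal_plus[symmetric] mult_nonneg_nonneg) simp_all
  finally show ?thesis
    using bin_entropy_le_cross_entropy[OF p _ _ b] True by (simp add: ennreal_leI)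
qed (use p in \<open>auto simp: ce_loss_def ennreal_mult_top\<close>)

lemma measurable_ce_loss[measurable]: "ce_loss b y \<in> borel_measurable borel"
  unfolding ce_loss_def by measurable

lemma bin_entropy_le_nn_integral_ce_loss:
  assumes N: "prob_space N" "sets N = sets borel" and p: "0 < p" "p < 1" and b: "1 < b"
  shows "ennreal (bin_entropy b p)
    \<le> ennreal p * (\<integral>\<^sup>+t. ce_loss b True t \<partial>N) + ennreal (1 - p) * (\<integral>\<^sup>+t. ce_loss b False t \<partial>N)"
proof -
  have [measurable_cong]: "sets N = sets borel" by fact
  have "ennreal (bin_entropy b p) = (\<integral>\<^sup>+t. ennreal (bin_entropy b p) \<partial>N)"
    using prob_space.emeasure_space_1[OF N(1)] by simp
  also have "\<dots> \<le> (\<integral>\<^sup>+t. ennreal p * ce_loss b True t + ennreal (1 - p) * ce_loss b False t \<partial>N)"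
    by (intro nn_integral_mono bin_entropy_le_ce_loss p b)
  also have "\<dots> = ennreal p * (\<integral>\<^sup>+t. ce_loss b True t \<partial>N) + ennreal (1 - p) * (\<integral>\<^sup>+t. ce_loss b False t \<partial>N)"
    by (simp add: nn_integral_add nn_integral_cmult)
  finally show ?thesis .
qed

lemma ce_loss_mult_eq:
  fixes PT PF b :: real and a :: bool
  assumes b: "1 < b" and nonneg: "0 \<le> PT" "0 \<le> PF"
  defines "Pa \<equiv> (if a then PT else PF)"
  shows "ce_loss b a (PT / (PT + PF)) * ennreal Pa = ennreal (- (Pa * log b (Pa / (PT + PF))))"
proof (cases "Pa = 0")
  case False
  then have pos: "0 < Pa" "0 < PT + PF" using nonneg by (auto simp: Pa_def split: if_splits)
  have ce: "ce_loss b a (PT / (PT + PF)) = ennreal (- log b (Pa / (PT + PF)))"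
  proof (cases a)
    case True
    then have "0 < PT / (PT + PF)" using pos by (intro divide_pos_pos) (simp_all add: Pa_def)
    then show ?thesis using True by (simp add: ce_loss_def Pa_def)
  next
    case False
    then have "PT / (PT + PF) < 1" "1 - PT / (PT + PF) = PF / (PT + PF)"
      using pos nonneg by (simp_all add: Pa_def field_simps)
    then show ?thesis using False by (simp add: ce_loss_def Pa_def)
  qed
  have "ce_loss b a (PT / (PT + PF)) * ennreal Pa = ennreal (- log b (Pa / (PT + PF)) * Pa)"
    unfolding ce using pos by (intro ennreal_mult''[symmetric]) simp
  then show ?thesis by (simp add: mult.commute)
qed simp

section \<open>Boolean random variables\<close>

lemma (in prob_space) distributed_count_UNIV:
  fixes X :: "'a \<Rightarrow> 'b::finite"
  assumes [measurable]: "X \<in> M \<rightarrow>\<^sub>M count_space UNIV"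
  shows "distributed M (count_space UNIV) X (\<lambda>x. ennreal \<P>(\<omega> in M. X \<omega> = x))"
  unfolding distributed_def
proof (intro conjI)
  show "distr M (count_space UNIV) X = density (count_space UNIV) (\<lambda>x. ennreal \<P>(\<omega> in M. X \<omega> = x))"
  proof (rule measure_eqI_finite[where A=UNIV])
    fix x :: 'b
    have "emeasure (distr M (count_space UNIV) X) {x} = emeasure M {\<omega>\<in>space M. X \<omega> = x}"
      by (subst emeasure_distr) (auto intro!: arg_cong[where f="emeasure M"])
    then show "emeasure (distr M (count_space UNIV) X) {x}
        = emeasure (density (count_space UNIV) (\<lambda>x. ennreal \<P>(\<omega> in M. X \<omega> = x))) {x}"
      by (simp add: emeasure_density nn_integral_count_space_finite emeasure_eq_measure)
  qed simp_all
qed simp_all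

lemma (in prob_space) nn_integral_distr_bool:
  assumes [measurable]: "A \<in> M \<rightarrow>\<^sub>M count_space UNIV"
  shows "(\<integral>\<^sup>+a. f a \<partial>distr M (count_space UNIV) A)
    = ennreal \<P>(\<omega> in M. A \<omega>) * f True + ennreal \<P>(\<omega> in M. \<not> A \<omega>) * f False"
proof -
  have "(\<integral>\<^sup>+a. f a \<partial>distr M (count_space UNIV) A)
      = (\<integral>\<^sup>+\<omega>. f True * indicator {\<omega>\<in>space M. A \<omega>} \<omega> + f False * indicator {\<omega>\<in>space M. \<not> A \<omega>} \<omega> \<partial>M)"
    by (subst nn_integral_distr) (auto intro!: nn_integral_cong split: split_indicator)
  then show ?thesis
    by (simp add: nn_integral_add nn_integral_cmult_indicator emeasure_eq_measure mult.commute)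
qed

lemma (in prob_space) integral_distr_bool:
  fixes f :: "bool \<Rightarrow> real"
  assumes [measurable]: "A \<in> M \<rightarrow>\<^sub>M count_space UNIV"
  shows "(\<integral>a. f a \<partial>distr M (count_space UNIV) A) = \<P>(\<omega> in M. A \<omega>) * f True + \<P>(\<omega> in M. \<not> A \<omega>) * f False"
  using distributed_count_UNIV[OF assms]
  by (simp add: distributed_def integral_density lebesgue_integral_count_space_finite UNIV_bool)

lemma (in information_space) entropy_bool:
  assumes [measurable]: "A \<in> M \<rightarrow>\<^sub>M count_space UNIV"
  shows "entropy b (count_space UNIV) A = bin_entropy b \<P>(\<omega> in M. A \<omega>)"
proof -
  have "entropy b (count_space UNIV) A
      = - (\<integral>x. \<P>(\<omega> in M. A \<omega> = x) * log b \<P>(\<omega> in M. A \<omega> = x) \<partial>count_space UNIV)"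
    by (rule entropy_distr[OF distributed_count_UNIV]) simp_all
  then show ?thesis
    by (simp add: lebesgue_integral_count_space_finite UNIV_bool bin_entropy_def prob_neg)
qed

lemma measurable_Pair_count_space_finite:
  fixes X :: "'a \<Rightarrow> 'b::finite" and Y :: "'a \<Rightarrow> 'c::finite"
  assumes "X \<in> M \<rightarrow>\<^sub>M count_space UNIV" "Y \<in> M \<rightarrow>\<^sub>M count_space UNIV"
  shows "(\<lambda>\<omega>. (X \<omega>, Y \<omega>)) \<in> M \<rightarrow>\<^sub>M count_space UNIV"
  using measurable_Pair[OF assms] pair_measure_count_space[of "UNIV :: 'b set" "UNIV :: 'c set"] by simp

lemma (in prob_space) nn_integral_finite_rv:
  fixes X :: "'a \<Rightarrow> 'b::finite"
  assumes [measurable]: "X \<in> M \<rightarrow>\<^sub>M count_space UNIV"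
  shows "(\<integral>\<^sup>+\<omega>. g (X \<omega>) \<partial>M) = (\<Sum>x\<in>UNIV. g x * ennreal \<P>(\<omega> in M. X \<omega> = x))"
proof -
  have "(\<integral>\<^sup>+\<omega>. g (X \<omega>) \<partial>M) = (\<integral>\<^sup>+x. g x \<partial>distr M (count_space UNIV) X)"
    by (simp add: nn_integral_distr)
  also have "\<dots> = (\<integral>\<^sup>+x. ennreal \<P>(\<omega> in M. X \<omega> = x) * g x \<partial>count_space UNIV)"
    using distributed_count_UNIV[OF assms] by (simp add: distributed_def nn_integral_density)
  finally show ?thesis by (simp add: nn_integral_count_space_finite mult.commute)
qed

lemma (in information_space) conditional_entropy_bool:
  fixes A Y :: "'a \<Rightarrow> bool"
  assumes [measurable]: "A \<in> M \<rightarrow>\<^sub>M count_space UNIV" "Y \<in> M \<rightarrow>\<^sub>M count_space UNIV"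
  shows "conditional_entropy b (count_space UNIV) (count_space UNIV) A Y =
     - (\<Sum>x\<in>UNIV. \<P>(\<omega> in M. (A \<omega>, Y \<omega>) = x) *
          log b (\<P>(\<omega> in M. (A \<omega>, Y \<omega>) = x) / \<P>(\<omega> in M. Y \<omega> = snd x)))"
proof -
  have bool2: "count_space UNIV \<Otimes>\<^sub>M count_space UNIV = (count_space UNIV :: (bool \<times> bool) measure)"
    using pair_measure_count_space[of "UNIV :: bool set" "UNIV :: bool set"] by simp
  have [measurable]: "(\<lambda>\<omega>. (A \<omega>, Y \<omega>)) \<in> M \<rightarrow>\<^sub>M count_space UNIV"
    by (simp add: bool2[symmetric])
  have "conditional_entropy b (count_space UNIV) (count_space UNIV) A Y =
     - (\<integral>(x, y). \<P>(\<omega> in M. (A \<omega>, Y \<omega>) = (x, y)) *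
          log b (\<P>(\<omega> in M. (A \<omega>, Y \<omega>) = (x, y)) / \<P>(\<omega> in M. Y \<omega> = y))
        \<partial>(count_space UNIV \<Otimes>\<^sub>M count_space UNIV))"
    by (rule conditional_entropy_generic_eq)
      (simp_all add: sigma_finite_measure_count_space_finite distributed_count_UNIV bool2)
  then show ?thesis
    by (simp only: bool2 lebesgue_integral_count_space_finite[OF finite_class.finite_UNIV] split_beta' prod.collapse)
qed

section \<open>Conditional probability given a random element\<close>

lemma (in prob_space) density_of_restricted_distr:
  assumes [measurable]: "Z \<in> M \<rightarrow>\<^sub>M MZ" "S \<in> events"
  obtains f where "f \<in> borel_measurable MZ"
    "\<And>\<phi>. \<phi> \<in> borel_measurable MZ \<Longrightarrow>
       (\<integral>\<^sup>+\<omega>. indicator S \<omega> * \<phi> (Z \<omega>) \<partial>M) = (\<integral>\<^sup>+z. f z * \<phi> z \<partial>distr M MZ Z)"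
proof -
  define \<mu> where "\<mu> = distr M MZ Z"
  define \<nu> where "\<nu> = distr (density M (indicator S)) MZ Z"
  interpret \<mu>: prob_space \<mu> unfolding \<mu>_def by (rule prob_space_distr) simp
  have [simp]: "sets \<mu> = sets MZ" "sets \<nu> = sets MZ" unfolding \<mu>_def \<nu>_def by simp_all
  have \<nu>: "(\<integral>\<^sup>+z. \<phi> z \<partial>\<nu>) = (\<integral>\<^sup>+\<omega>. indicator S \<omega> * \<phi> (Z \<omega>) \<partial>M)"
    if [measurable]: "\<phi> \<in> borel_measurable MZ" for \<phi>
    unfolding \<nu>_def by (simp add: nn_integral_distr nn_integral_density)
  have "absolutely_continuous \<mu> \<nu>"
    unfolding absolutely_continuous_def
  proof
    fix E assume "E \<in> null_sets \<mu>"
    then have [measurable]: "E \<in> sets MZ" and "emeasure \<mu> E = 0" by auto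
    have "emeasure \<nu> E = (\<integral>\<^sup>+\<omega>. indicator S \<omega> * indicator E (Z \<omega>) \<partial>M)"
      using \<nu>[of "indicator E"] by simp
    also have "\<dots> \<le> (\<integral>\<^sup>+\<omega>. indicator E (Z \<omega>) \<partial>M)"
      by (intro nn_integral_mono) (auto split: split_indicator)
    also have "\<dots> = emeasure \<mu> E"
      unfolding \<mu>_def using nn_integral_distr[of Z M MZ "indicator E"] by simp
    finally show "E \<in> null_sets \<nu>" using \<open>emeasure \<mu> E = 0\<close> by (simp add: null_sets_def)
  qed
  then have density: "density \<mu> (RN_deriv \<mu> \<nu>) = \<nu>"
    by (intro \<mu>.density_RN_deriv) simp_all
  have "RN_deriv \<mu> \<nu> \<in> borel_measurable MZ"
    by (subst measurable_cong_sets[of MZ \<mu> borel borel]) simp_all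
  moreover have "(\<integral>\<^sup>+\<omega>. indicator S \<omega> * \<phi> (Z \<omega>) \<partial>M) = (\<integral>\<^sup>+z. RN_deriv \<mu> \<nu> z * \<phi> z \<partial>distr M MZ Z)"
    if [measurable]: "\<phi> \<in> borel_measurable MZ" for \<phi>
  proof -
    have "\<phi> \<in> borel_measurable \<mu>"
      by (subst measurable_cong_sets[of \<mu> MZ borel borel]) simp_all
    then have "(\<integral>\<^sup>+z. RN_deriv \<mu> \<nu> z * \<phi> z \<partial>\<mu>) = (\<integral>\<^sup>+z. \<phi> z \<partial>density \<mu> (RN_deriv \<mu> \<nu>))"
      by (subst nn_integral_density) simp_all
    also have "\<dots> = (\<integral>\<^sup>+\<omega>. indicator S \<omega> * \<phi> (Z \<omega>) \<partial>M)"
      by (simp add: density \<nu>)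
    finally show ?thesis by (simp add: \<mu>_def)
  qed
  ultimately show ?thesis by (rule that)
qed

lemma (in prob_space) AE_restricted_distr_densities_add_eq_1:
  assumes [measurable]: "Z \<in> M \<rightarrow>\<^sub>M MZ" "A \<in> M \<rightarrow>\<^sub>M count_space UNIV" "\<And>c. f c \<in> borel_measurable MZ"
    and f: "\<And>c \<phi>. \<phi> \<in> borel_measurable MZ \<Longrightarrow>
      (\<integral>\<^sup>+\<omega>. indicator {\<omega>\<in>space M. A \<omega> = c} \<omega> * \<phi> (Z \<omega>) \<partial>M) = (\<integral>\<^sup>+z. f c z * \<phi> z \<partial>distr M MZ Z)"
  shows "AE z in distr M MZ Z. f True z + f False z = 1"
proof -
  define \<mu> where "\<mu> = distr M MZ Z"
  interpret \<mu>: prob_space \<mu> unfolding \<mu>_def by (rule prob_space_distr) simp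
  have [measurable_cong]: "sets \<mu> = sets MZ" unfolding \<mu>_def by simp
  have "density \<mu> (\<lambda>z. f True z + f False z) = density \<mu> (\<lambda>_. 1)"
  proof (rule measure_eqI)
    fix E assume "E \<in> sets (density \<mu> (\<lambda>z. f True z + f False z))"
    then have [measurable]: "E \<in> sets MZ" by (simp add: \<mu>_def)
    have "(\<integral>\<^sup>+z. (f True z + f False z) * indicator E z \<partial>\<mu>)
        = (\<integral>\<^sup>+z. f True z * indicator E z \<partial>\<mu>) + (\<integral>\<^sup>+z. f False z * indicator E z \<partial>\<mu>)"
      by (simp add: distrib_right nn_integral_add)
    also have "\<dots> = (\<integral>\<^sup>+\<omega>. indicator {\<omega>\<in>space M. A \<omega> = True} \<omega> * indicator E (Z \<omega>) \<partial>M)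
        + (\<integral>\<^sup>+\<omega>. indicator {\<omega>\<in>space M. A \<omega> = False} \<omega> * indicator E (Z \<omega>) \<partial>M)"
      using f[of "indicator E" True] f[of "indicator E" False] by (simp add: \<mu>_def)
    also have "\<dots> = (\<integral>\<^sup>+\<omega>. indicator {\<omega>\<in>space M. A \<omega> = True} \<omega> * indicator E (Z \<omega>)
        + indicator {\<omega>\<in>space M. A \<omega> = False} \<omega> * indicator E (Z \<omega>) \<partial>M)"
      by (rule nn_integral_add[symmetric]) simp_all
    also have "\<dots> = (\<integral>\<^sup>+\<omega>. indicator E (Z \<omega>) \<partial>M)"
      by (intro nn_integral_cong) (auto split: split_indicator)
    also have "\<dots> = (\<integral>\<^sup>+z. 1 * indicator E z \<partial>\<mu>)"
      unfolding \<mu>_def using nn_integral_distr[of Z M MZ "indicator E"] by simp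
    finally show "emeasure (density \<mu> (\<lambda>z. f True z + f False z)) E = emeasure (density \<mu> (\<lambda>_. 1)) E"
      by (simp add: emeasure_density)
  qed simp
  then show ?thesis
    unfolding \<mu>_def[symmetric] by (subst (asm) \<mu>.density_unique_iff) simp_all
qed

lemma ennreal_add_eq_1D:
  fixes a b :: ennreal
  assumes "a + b = 1"
  shows "a = ennreal (min 1 (enn2real a))" and "b = ennreal (1 - min 1 (enn2real a))"
proof -
  have "a \<le> 1" using assms by (metis le_iff_add)
  then show a: "a = ennreal (min 1 (enn2real a))" by (cases a) (auto simp: min_def top_unique)
  have "b = (a + b) - a"
    by (rule ennreal_add_diff_cancel_left[symmetric]) (use \<open>a \<le> 1\<close> in \<open>auto simp: top_unique\<close>)
  also have "\<dots> = 1 - ennreal (min 1 (enn2real a))" unfolding assms by (subst a) simp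
  also have "\<dots> = ennreal (1 - min 1 (enn2real a))" by (subst ennreal_minus[symmetric]) simp_all
  finally show "b = ennreal (1 - min 1 (enn2real a))" .
qed

text \<open>\<open>r z\<close> is a version of the conditional probability \<open>P(A | Z = z)\<close>.\<close>
definition is_cond_prob ::
  "'w measure \<Rightarrow> 'z measure \<Rightarrow> ('w \<Rightarrow> 'z) \<Rightarrow> ('w \<Rightarrow> bool) \<Rightarrow> ('z \<Rightarrow> real) \<Rightarrow> bool" where
  "is_cond_prob M MZ Z A r \<longleftrightarrow> r \<in> borel_measurable MZ \<and> (\<forall>z. 0 \<le> r z \<and> r z \<le> 1) \<and>
     (\<forall>c. \<forall>\<phi>\<in>borel_measurable MZ. (\<integral>\<^sup>+\<omega>. indicator {\<omega>\<in>space M. A \<omega> = c} \<omega> * \<phi> (Z \<omega>) \<partial>M)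
        = (\<integral>\<^sup>+z. ennreal (if c then r z else 1 - r z) * \<phi> z \<partial>distr M MZ Z))"

lemma is_cond_probD:
  assumes "is_cond_prob M MZ Z A r"
  shows is_cond_prob_measurable: "r \<in> borel_measurable MZ"
    and is_cond_prob_nonneg: "0 \<le> r z"
    and is_cond_prob_le_1: "r z \<le> 1"
    and is_cond_prob_nn_integral: "\<phi> \<in> borel_measurable MZ \<Longrightarrow>
      (\<integral>\<^sup>+\<omega>. indicator {\<omega>\<in>space M. A \<omega> = c} \<omega> * \<phi> (Z \<omega>) \<partial>M)
        = (\<integral>\<^sup>+z. ennreal (if c then r z else 1 - r z) * \<phi> z \<partial>distr M MZ Z)"
  using assms by (auto simp: is_cond_prob_def)

lemma (in prob_space) is_cond_prob_exists:
  assumes Z[measurable]: "Z \<in> M \<rightarrow>\<^sub>M MZ" and [measurable]: "A \<in> M \<rightarrow>\<^sub>M count_space UNIV"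
  obtains r where "is_cond_prob M MZ Z A r"
proof -
  have "\<forall>c. \<exists>f. f \<in> borel_measurable MZ \<and> (\<forall>\<phi>\<in>borel_measurable MZ.
      (\<integral>\<^sup>+\<omega>. indicator {\<omega>\<in>space M. A \<omega> = c} \<omega> * \<phi> (Z \<omega>) \<partial>M) = (\<integral>\<^sup>+z. f z * \<phi> z \<partial>distr M MZ Z))"
  proof
    fix c
    show "\<exists>f. f \<in> borel_measurable MZ \<and> (\<forall>\<phi>\<in>borel_measurable MZ.
        (\<integral>\<^sup>+\<omega>. indicator {\<omega>\<in>space M. A \<omega> = c} \<omega> * \<phi> (Z \<omega>) \<partial>M) = (\<integral>\<^sup>+z. f z * \<phi> z \<partial>distr M MZ Z))"
      by (rule density_of_restricted_distr[OF Z, of "{\<omega>\<in>space M. A \<omega> = c}"]) auto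
  qed
  then obtain f where f_meas[measurable]: "\<And>c. f c \<in> borel_measurable MZ" and f: "\<And>c \<phi>. \<phi> \<in> borel_measurable MZ \<Longrightarrow>
      (\<integral>\<^sup>+\<omega>. indicator {\<omega>\<in>space M. A \<omega> = c} \<omega> * \<phi> (Z \<omega>) \<partial>M) = (\<integral>\<^sup>+z. f c z * \<phi> z \<partial>distr M MZ Z)"
    by (auto dest!: choice)
  define r where "r z = min 1 (enn2real (f True z))" for z
  have f_r: "AE z in distr M MZ Z. f c z = ennreal (if c then r z else 1 - r z)" for c
    using AE_restricted_distr_densities_add_eq_1[OF Z _ f_meas f]
    by (auto simp: r_def dest: ennreal_add_eq_1D elim!: eventually_mono)
  have "is_cond_prob M MZ Z A r"
    unfolding is_cond_prob_def
  proof (intro conjI allI ballI)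
    show "r \<in> borel_measurable MZ" unfolding r_def by measurable
    show "0 \<le> r z" "r z \<le> 1" for z unfolding r_def by auto
    fix c and \<phi> :: "_ \<Rightarrow> ennreal" assume [measurable]: "\<phi> \<in> borel_measurable MZ"
    show "(\<integral>\<^sup>+\<omega>. indicator {\<omega>\<in>space M. A \<omega> = c} \<omega> * \<phi> (Z \<omega>) \<partial>M)
        = (\<integral>\<^sup>+z. ennreal (if c then r z else 1 - r z) * \<phi> z \<partial>distr M MZ Z)"
      unfolding f[OF \<open>\<phi> \<in> _\<close>] using f_r[of c] by (intro nn_integral_cong_AE) (auto elim: eventually_mono)
  qed
  then show ?thesis by (rule that)
qed

lemma (in prob_space) integral_cond_prob:
  assumes [measurable]: "Z \<in> M \<rightarrow>\<^sub>M MZ" "A \<in> M \<rightarrow>\<^sub>M count_space UNIV" and r: "is_cond_prob M MZ Z A r"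
  shows "(\<integral>z. r z \<partial>distr M MZ Z) = \<P>(\<omega> in M. A \<omega>)"
proof -
  note [measurable] = is_cond_prob_measurable[OF r]
  have "(\<integral>\<^sup>+z. ennreal (r z) \<partial>distr M MZ Z) = (\<integral>\<^sup>+\<omega>. indicator {\<omega>\<in>space M. A \<omega> = True} \<omega> * 1 \<partial>M)"
    using is_cond_prob_nn_integral[OF r, of "\<lambda>_. 1" True] by simp
  also have "\<dots> = ennreal \<P>(\<omega> in M. A \<omega>)" by (simp add: emeasure_eq_measure)
  finally show ?thesis
    using is_cond_prob_nonneg[OF r] by (subst integral_eq_nn_integral) simp_all
qed

lemma (in prob_space) integrable_bin_entropy_cond_prob:
  assumes [measurable]: "Z \<in> M \<rightarrow>\<^sub>M MZ" and r: "is_cond_prob M MZ Z A r" and b: "1 < b"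
  shows "integrable (distr M MZ Z) (\<lambda>z. bin_entropy b (r z))"
proof -
  interpret \<mu>: prob_space "distr M MZ Z" by (rule prob_space_distr) simp
  note [measurable] = is_cond_prob_measurable[OF r]
  show ?thesis
  proof (rule \<mu>.integrable_const_bound[where B="1 / ln b"])
    show "AE z in distr M MZ Z. norm (bin_entropy b (r z)) \<le> 1 / ln b"
      using is_cond_prob_nonneg[OF r] is_cond_prob_le_1[OF r] b
      by (intro AE_I2) (simp add: bin_entropy_le bin_entropy_nonneg)
  qed (simp add: bin_entropy_def)
qed

section \<open>Mutual information with a binary variable\<close>

text \<open>\<open>likelihood_ratio p x a = P(A = a | Z = z) / P(A = a)\<close> for \<open>p = P(A)\<close> and \<open>x = P(A | Z = z)\<close>.\<close>
definition likelihood_ratio :: "real \<Rightarrow> real \<Rightarrow> bool \<Rightarrow> real" where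
  "likelihood_ratio p x a = (if a then x / p else (1 - x) / (1 - p))"

lemma likelihood_ratio_nonneg: "0 \<le> p \<Longrightarrow> p \<le> 1 \<Longrightarrow> 0 \<le> x \<Longrightarrow> x \<le> 1 \<Longrightarrow> 0 \<le> likelihood_ratio p x a"
  by (simp add: likelihood_ratio_def)

lemma mult_likelihood_ratio_True: "0 < p \<Longrightarrow> p * likelihood_ratio p x True = x"
  by (simp add: likelihood_ratio_def)

lemma mult_likelihood_ratio_False: "p < 1 \<Longrightarrow> (1 - p) * likelihood_ratio p x False = 1 - x"
  by (simp add: likelihood_ratio_def)

lemma likelihood_ratio_le:
  assumes "0 < p" "p < 1" "0 \<le> x" "x \<le> 1"
  shows "likelihood_ratio p x a \<le> 1 / p + 1 / (1 - p)"
proof -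
  have "x / p \<le> 1 / p" "(1 - x) / (1 - p) \<le> 1 / (1 - p)" "0 \<le> 1 / p" "0 \<le> 1 / (1 - p)"
    using assms by (simp_all add: divide_right_mono)
  then have "x / p \<le> 1 / p + 1 / (1 - p)" "(1 - x) / (1 - p) \<le> 1 / p + 1 / (1 - p)"
    by linarith+
  then show ?thesis by (simp add: likelihood_ratio_def)
qed

lemma abs_likelihood_ratio_mult_log_le:
  assumes b: "1 < b" and p: "0 < p" "p < 1" and x: "0 \<le> x" "x \<le> 1"
  shows "\<bar>likelihood_ratio p x a * log b (likelihood_ratio p x a)\<bar> \<le> (1 + (1 / p + 1 / (1 - p))\<^sup>2) / ln b"
proof -
  have lr: "0 \<le> likelihood_ratio p x a" using p x by (simp add: likelihood_ratio_nonneg)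
  then have "\<bar>likelihood_ratio p x a * log b (likelihood_ratio p x a)\<bar> \<le> (1 + (likelihood_ratio p x a)\<^sup>2) / ln b"
    using b by (rule abs_mult_log_le)
  also have "\<dots> \<le> (1 + (1 / p + 1 / (1 - p))\<^sup>2) / ln b"
    using lr likelihood_ratio_le[OF p x] b by (intro divide_right_mono add_left_mono power_mono) simp_all
  finally show ?thesis .
qed

lemma likelihood_ratio_log_mean:
  assumes p: "0 < p" "p < 1" and x: "0 \<le> x" "x \<le> 1"
  shows "p * (likelihood_ratio p x True * log b (likelihood_ratio p x True))
      + (1 - p) * (likelihood_ratio p x False * log b (likelihood_ratio p x False))
    = - bin_entropy b x - log b (1 - p) - (log b p - log b (1 - p)) * x"
  using xlogx_divide[of x p b] xlogx_divide[of "1 - x" "1 - p" b] x p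
  by (simp add: likelihood_ratio_def bin_entropy_def algebra_simps)

lemma (in prob_space) distr_pair_bool_eq_density:
  assumes [measurable]: "Z \<in> M \<rightarrow>\<^sub>M MZ" "A \<in> M \<rightarrow>\<^sub>M count_space UNIV"
    and r: "is_cond_prob M MZ Z A r" and p: "0 < \<P>(\<omega> in M. A \<omega>)" "\<P>(\<omega> in M. A \<omega>) < 1"
  shows "distr M (MZ \<Otimes>\<^sub>M count_space UNIV) (\<lambda>\<omega>. (Z \<omega>, A \<omega>))
    = density (distr M MZ Z \<Otimes>\<^sub>M distr M (count_space UNIV) A)
        (\<lambda>(z, a). likelihood_ratio \<P>(\<omega> in M. A \<omega>) (r z) a)"
    (is "?Q = density ?P ?D")
proof (rule measure_eqI)
  define p where "p = \<P>(\<omega> in M. A \<omega>)"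
  define \<mu> where "\<mu> = distr M MZ Z"
  define PA where "PA = distr M (count_space UNIV) A"
  interpret PA: prob_space PA unfolding PA_def by (rule prob_space_distr) simp
  note [measurable] = is_cond_prob_measurable[OF r]
  have sets_P[measurable_cong]: "sets ?P = sets (MZ \<Otimes>\<^sub>M count_space UNIV)"
    by (rule sets_pair_measure_cong) simp_all
  show "sets ?Q = sets (density ?P ?D)" by (simp add: sets_P)
  fix E assume "E \<in> sets ?Q"
  then have [measurable]: "E \<in> sets (MZ \<Otimes>\<^sub>M count_space UNIV)" by simp
  have "emeasure ?Q E = (\<integral>\<^sup>+\<omega>. indicator {\<omega>\<in>space M. A \<omega> = True} \<omega> * indicator E (Z \<omega>, True)
      + indicator {\<omega>\<in>space M. A \<omega> = False} \<omega> * indicator E (Z \<omega>, False) \<partial>M)"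
    by (subst emeasure_distr) (auto simp: nn_integral_indicator[symmetric] simp del: nn_integral_indicator
        intro!: nn_integral_cong split: split_indicator)
  also have "\<dots> = (\<integral>\<^sup>+z. ennreal (r z) * indicator E (z, True) \<partial>\<mu>)
      + (\<integral>\<^sup>+z. ennreal (1 - r z) * indicator E (z, False) \<partial>\<mu>)"
    using is_cond_prob_nn_integral[OF r, of "\<lambda>z. indicator E (z, True)" True]
      is_cond_prob_nn_integral[OF r, of "\<lambda>z. indicator E (z, False)" False]
    unfolding \<mu>_def by (simp add: nn_integral_add)
  also have "\<dots> = (\<integral>\<^sup>+z. ennreal (r z) * indicator E (z, True)
      + ennreal (1 - r z) * indicator E (z, False) \<partial>\<mu>)"
    by (rule nn_integral_add[symmetric]) (simp_all add: \<mu>_def)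
  also have "\<dots> = (\<integral>\<^sup>+z. \<integral>\<^sup>+a. ?D (z, a) * indicator E (z, a) \<partial>PA \<partial>\<mu>)"
    using p is_cond_prob_nonneg[OF r] is_cond_prob_le_1[OF r]
    by (intro nn_integral_cong)
      (simp add: PA_def nn_integral_distr_bool prob_neg ennreal_mult[symmetric] mult.assoc[symmetric]
        likelihood_ratio_nonneg mult_likelihood_ratio_True mult_likelihood_ratio_False)
  also have "\<dots> = (\<integral>\<^sup>+x. ?D x * indicator E x \<partial>(\<mu> \<Otimes>\<^sub>M PA))"
    by (subst PA.nn_integral_fst[of "\<lambda>x. ?D x * indicator E x" \<mu>, symmetric])
      (simp_all add: \<mu>_def PA_def likelihood_ratio_def split_beta')
  also have "\<dots> = emeasure (density ?P ?D) E"
  proof -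
    have "?D \<in> borel_measurable ?P" unfolding likelihood_ratio_def by measurable
    then show ?thesis unfolding \<mu>_def PA_def by (rule emeasure_density[symmetric]) (simp add: sets_P)
  qed
  finally show "emeasure ?Q E = emeasure (density ?P ?D) E" .
qed

lemma (in prob_space) distr_pair_bool_swap_eq_density:
  assumes [measurable]: "Z \<in> M \<rightarrow>\<^sub>M MZ" "A \<in> M \<rightarrow>\<^sub>M count_space UNIV"
    and r: "is_cond_prob M MZ Z A r" and p: "0 < \<P>(\<omega> in M. A \<omega>)" "\<P>(\<omega> in M. A \<omega>) < 1"
  shows "distr M (count_space UNIV \<Otimes>\<^sub>M MZ) (\<lambda>\<omega>. (A \<omega>, Z \<omega>))
    = density (distr M (count_space UNIV) A \<Otimes>\<^sub>M distr M MZ Z)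
        (\<lambda>(a, z). likelihood_ratio \<P>(\<omega> in M. A \<omega>) (r z) a)"
proof -
  define \<mu> where "\<mu> = distr M MZ Z"
  define PA where "PA = distr M (count_space UNIV) A"
  define D where "D x = ennreal (likelihood_ratio \<P>(\<omega> in M. A \<omega>) (r (fst x)) (snd x))" for x
  interpret \<mu>: prob_space \<mu> unfolding \<mu>_def by (rule prob_space_distr) simp
  interpret PA: prob_space PA unfolding PA_def by (rule prob_space_distr) simp
  interpret pair_sigma_finite \<mu> PA ..
  note [measurable] = is_cond_prob_measurable[OF r]
  have sets_pair[measurable_cong]: "sets (\<mu> \<Otimes>\<^sub>M PA) = sets (MZ \<Otimes>\<^sub>M count_space UNIV)"
      "sets (PA \<Otimes>\<^sub>M \<mu>) = sets (count_space UNIV \<Otimes>\<^sub>M MZ)"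
    by (simp_all add: \<mu>_def PA_def sets_pair_measure_cong)
  have [measurable]: "prod.swap \<in> MZ \<Otimes>\<^sub>M count_space UNIV \<rightarrow>\<^sub>M count_space UNIV \<Otimes>\<^sub>M MZ"
      "prod.swap \<in> count_space UNIV \<Otimes>\<^sub>M MZ \<rightarrow>\<^sub>M MZ \<Otimes>\<^sub>M count_space UNIV"
    unfolding prod.swap_def[abs_def] by measurable
  have [measurable]: "D \<in> borel_measurable (MZ \<Otimes>\<^sub>M count_space UNIV)"
    unfolding D_def likelihood_ratio_def by measurable
  have "distr M (count_space UNIV \<Otimes>\<^sub>M MZ) (\<lambda>\<omega>. (A \<omega>, Z \<omega>))
      = distr (distr M (MZ \<Otimes>\<^sub>M count_space UNIV) (\<lambda>\<omega>. (Z \<omega>, A \<omega>))) (count_space UNIV \<Otimes>\<^sub>M MZ) prod.swap"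
    by (subst distr_distr) (simp_all add: comp_def)
  also have "distr M (MZ \<Otimes>\<^sub>M count_space UNIV) (\<lambda>\<omega>. (Z \<omega>, A \<omega>)) = density (\<mu> \<Otimes>\<^sub>M PA) D"
    unfolding \<mu>_def PA_def D_def using distr_pair_bool_eq_density[OF assms] by (simp add: split_beta')
  also have "\<mu> \<Otimes>\<^sub>M PA = distr (PA \<Otimes>\<^sub>M \<mu>) (\<mu> \<Otimes>\<^sub>M PA) prod.swap"
  proof -
    have "(\<lambda>(x, y). (y, x)) = prod.swap" by (simp add: fun_eq_iff)
    then show ?thesis using distr_pair_swap by metis
  qed
  also have "density (distr (PA \<Otimes>\<^sub>M \<mu>) (\<mu> \<Otimes>\<^sub>M PA) prod.swap) D
      = distr (density (PA \<Otimes>\<^sub>M \<mu>) (\<lambda>x. D (prod.swap x))) (\<mu> \<Otimes>\<^sub>M PA) prod.swap"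
    by (rule density_distr) simp_all
  also have "distr \<dots> (count_space UNIV \<Otimes>\<^sub>M MZ) prod.swap = density (PA \<Otimes>\<^sub>M \<mu>) (\<lambda>x. D (prod.swap x))"
  proof -
    have "sets (count_space UNIV \<Otimes>\<^sub>M MZ) = sets (density (PA \<Otimes>\<^sub>M \<mu>) (\<lambda>x. D (prod.swap x)))"
      by (simp add: sets_pair)
    then show ?thesis by (subst distr_distr) (simp_all add: comp_def distr_id2)
  qed
  finally show ?thesis
    by (simp add: \<mu>_def PA_def D_def split_beta')
qed

text \<open>Independence of two random elements with values in different spaces (the library's
  \<open>indep_var\<close> requires both to take values in the same type).\<close>
definition indep_pair :: "'a measure \<Rightarrow> 'b measure \<Rightarrow> ('a \<Rightarrow> 'b) \<Rightarrow> 'c measure \<Rightarrow> ('a \<Rightarrow> 'c) \<Rightarrow> bool" where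
  "indep_pair M MX X MY Y \<longleftrightarrow> distr M (MX \<Otimes>\<^sub>M MY) (\<lambda>\<omega>. (X \<omega>, Y \<omega>)) = distr M MX X \<Otimes>\<^sub>M distr M MY Y"

lemma (in prob_space) indep_pair_compose:
  assumes indep: "indep_pair M MX X MY Y"
    and [measurable]: "X \<in> M \<rightarrow>\<^sub>M MX" "Y \<in> M \<rightarrow>\<^sub>M MY" "g \<in> MY \<rightarrow>\<^sub>M MY'"
  shows "indep_pair M MX X MY' (\<lambda>\<omega>. g (Y \<omega>))"
proof -
  have "distr M (MX \<Otimes>\<^sub>M MY') (\<lambda>\<omega>. (X \<omega>, g (Y \<omega>)))
      = distr (distr M (MX \<Otimes>\<^sub>M MY) (\<lambda>\<omega>. (X \<omega>, Y \<omega>))) (MX \<Otimes>\<^sub>M MY') (\<lambda>(x, y). (x, g y))"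
    by (subst distr_distr) (simp_all add: comp_def)
  also have "\<dots> = distr (distr M MX X \<Otimes>\<^sub>M distr M MY Y) (MX \<Otimes>\<^sub>M MY') (\<lambda>(x, y). (id x, g y))"
    using indep by (simp add: indep_pair_def)
  also have "\<dots> = distr (distr M MX X) MX id \<Otimes>\<^sub>M distr (distr M MY Y) MY' g"
    by (rule pair_measure_distr[symmetric])
      (simp_all add: prob_space_imp_sigma_finite prob_space.prob_space_distr prob_space_distr)
  also have "\<dots> = distr M MX X \<Otimes>\<^sub>M distr M MY' (\<lambda>\<omega>. g (Y \<omega>))"
    by (simp add: distr_distr comp_def distr_id2)
  finally show ?thesis unfolding indep_pair_def .
qed

lemma (in prob_space) nn_integral_indep_pair_indicator:
  assumes [measurable]: "Z \<in> M \<rightarrow>\<^sub>M MZ" "A \<in> M \<rightarrow>\<^sub>M count_space UNIV" "\<phi> \<in> borel_measurable MZ"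
    and indep: "indep_pair M MZ Z (count_space UNIV) A"
  shows "(\<integral>\<^sup>+\<omega>. indicator {\<omega>\<in>space M. A \<omega> = c} \<omega> * \<phi> (Z \<omega>) \<partial>M)
    = \<P>(\<omega> in M. A \<omega> = c) * (\<integral>\<^sup>+\<omega>. \<phi> (Z \<omega>) \<partial>M)"
proof -
  define PA where "PA = distr M (count_space UNIV) A"
  interpret PA: prob_space PA unfolding PA_def by (rule prob_space_distr) simp
  have [measurable_cong]: "sets (distr M MZ Z \<Otimes>\<^sub>M PA) = sets (MZ \<Otimes>\<^sub>M count_space UNIV)"
    by (simp add: PA_def sets_pair_measure_cong)
  define g where "g x = (if snd x = c then \<phi> (fst x) else 0)" for x
  have [measurable]: "g \<in> borel_measurable (MZ \<Otimes>\<^sub>M count_space UNIV)" unfolding g_def by measurable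
  have "(\<integral>\<^sup>+\<omega>. indicator {\<omega>\<in>space M. A \<omega> = c} \<omega> * \<phi> (Z \<omega>) \<partial>M) = (\<integral>\<^sup>+\<omega>. g (Z \<omega>, A \<omega>) \<partial>M)"
    by (intro nn_integral_cong) (simp add: g_def indicator_def)
  also have "\<dots> = (\<integral>\<^sup>+x. g x \<partial>distr M (MZ \<Otimes>\<^sub>M count_space UNIV) (\<lambda>\<omega>. (Z \<omega>, A \<omega>)))"
    by (simp add: nn_integral_distr)
  also have "\<dots> = (\<integral>\<^sup>+x. g x \<partial>(distr M MZ Z \<Otimes>\<^sub>M PA))"
    using indep unfolding indep_pair_def PA_def by simp
  also have "\<dots> = (\<integral>\<^sup>+z. \<integral>\<^sup>+a. g (z, a) \<partial>PA \<partial>distr M MZ Z)"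
    by (rule PA.nn_integral_fst[symmetric]) simp
  also have "\<dots> = (\<integral>\<^sup>+z. \<P>(\<omega> in M. A \<omega> = c) * \<phi> z \<partial>distr M MZ Z)"
  proof (intro nn_integral_cong)
    fix z
    have "(\<integral>\<^sup>+a. g (z, a) \<partial>PA) = (\<integral>\<^sup>+a. \<phi> z * indicator {c} a \<partial>PA)"
      by (intro nn_integral_cong) (simp add: g_def)
    also have "\<dots> = \<phi> z * emeasure M (A -` {c} \<inter> space M)"
      by (simp add: nn_integral_cmult_indicator PA_def emeasure_distr)
    also have "A -` {c} \<inter> space M = {\<omega>\<in>space M. A \<omega> = c}" by auto
    finally show "(\<integral>\<^sup>+a. g (z, a) \<partial>PA) = \<P>(\<omega> in M. A \<omega> = c) * \<phi> z"
      by (simp add: emeasure_eq_measure mult.commute)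
  qed
  also have "\<dots> = \<P>(\<omega> in M. A \<omega> = c) * (\<integral>\<^sup>+\<omega>. \<phi> (Z \<omega>) \<partial>M)"
    by (simp add: nn_integral_cmult nn_integral_distr)
  finally show ?thesis .
qed

lemma (in information_space) indep_pair_if_mutual_information_eq_0:
  assumes Z[measurable]: "Z \<in> M \<rightarrow>\<^sub>M MZ" and A[measurable]: "A \<in> M \<rightarrow>\<^sub>M count_space UNIV"
    and p: "0 < \<P>(\<omega> in M. A \<omega>)" "\<P>(\<omega> in M. A \<omega>) < 1"
    and mi: "mutual_information b MZ (count_space UNIV) Z A = 0"
  shows "indep_pair M MZ Z (count_space UNIV) A"
proof -
  obtain r where r: "is_cond_prob M MZ Z A r" using is_cond_prob_exists[OF Z A] by blast
  note [measurable] = is_cond_prob_measurable[OF r]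
  define \<mu> where "\<mu> = distr M MZ Z"
  define PA where "PA = distr M (count_space UNIV) A"
  define D where "D = (\<lambda>(z, a). likelihood_ratio \<P>(\<omega> in M. A \<omega>) (r z) a)"
  interpret \<mu>: prob_space \<mu> unfolding \<mu>_def by (rule prob_space_distr) simp
  interpret PA: prob_space PA unfolding PA_def by (rule prob_space_distr) simp
  interpret \<mu>PA: pair_prob_space \<mu> PA ..
  interpret P: information_space "\<mu> \<Otimes>\<^sub>M PA" b by standard (rule b_gt_1)
  have [measurable_cong]: "sets (\<mu> \<Otimes>\<^sub>M PA) = sets (MZ \<Otimes>\<^sub>M count_space UNIV)"
    by (simp add: \<mu>_def PA_def sets_pair_measure_cong)
  have D_meas[measurable]: "D \<in> borel_measurable (\<mu> \<Otimes>\<^sub>M PA)"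
    unfolding D_def likelihood_ratio_def by measurable
  have D_nonneg: "0 \<le> D x" for x
    using p is_cond_prob_nonneg[OF r] is_cond_prob_le_1[OF r]
    by (auto simp: D_def likelihood_ratio_nonneg split: prod.split)
  have joint: "distr M (MZ \<Otimes>\<^sub>M count_space UNIV) (\<lambda>\<omega>. (Z \<omega>, A \<omega>)) = density (\<mu> \<Otimes>\<^sub>M PA) D"
    unfolding \<mu>_def PA_def D_def by (rule distr_pair_bool_eq_density[OF _ _ r p]) simp_all
  have "integrable (\<mu> \<Otimes>\<^sub>M PA) (\<lambda>x. D x * log b (D x))"
  proof (rule finite_measure.integrable_const_bound[OF \<mu>PA.P.finite_measure_axioms])
    show "AE x in \<mu> \<Otimes>\<^sub>M PA. norm (D x * log b (D x))
        \<le> (1 + (1 / \<P>(\<omega> in M. A \<omega>) + 1 / (1 - \<P>(\<omega> in M. A \<omega>)))\<^sup>2) / ln b"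
      using abs_likelihood_ratio_mult_log_le[OF b_gt_1 p is_cond_prob_nonneg[OF r] is_cond_prob_le_1[OF r]]
      by (intro AE_I2) (simp add: D_def split: prod.split)
  qed measurable
  moreover have "prob_space (density (\<mu> \<Otimes>\<^sub>M PA) D)"
    unfolding joint[symmetric] by (rule prob_space_distr) simp
  moreover have "KL_divergence b (\<mu> \<Otimes>\<^sub>M PA) (density (\<mu> \<Otimes>\<^sub>M PA) D) = 0"
    using mi unfolding mutual_information_def by (simp add: joint[unfolded \<mu>_def PA_def] \<mu>_def PA_def)
  ultimately have "density (\<mu> \<Otimes>\<^sub>M PA) D = \<mu> \<Otimes>\<^sub>M PA"
    using P.KL_eq_0_iff_eq[of D] D_nonneg by simp
  then show ?thesis
    using joint unfolding indep_pair_def \<mu>_def PA_def by simp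
qed

lemma (in information_space) mutual_information_bool_eq:
  assumes Z[measurable]: "Z \<in> M \<rightarrow>\<^sub>M MZ" and A[measurable]: "A \<in> M \<rightarrow>\<^sub>M count_space UNIV"
    and r: "is_cond_prob M MZ Z A r" and p: "0 < \<P>(\<omega> in M. A \<omega>)" "\<P>(\<omega> in M. A \<omega>) < 1"
  shows "mutual_information b (count_space UNIV) MZ A Z
    = bin_entropy b \<P>(\<omega> in M. A \<omega>) - (\<integral>z. bin_entropy b (r z) \<partial>distr M MZ Z)"
proof -
  define p where "p = \<P>(\<omega> in M. A \<omega>)"
  define \<mu> where "\<mu> = distr M MZ Z"
  define PA where "PA = distr M (count_space UNIV) A"
  define F where "F a z = likelihood_ratio p (r z) a * log b (likelihood_ratio p (r z) a)" for a z
  define B where "B = (1 + (1 / p + 1 / (1 - p))\<^sup>2) / ln b"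
  interpret \<mu>: prob_space \<mu> unfolding \<mu>_def by (rule prob_space_distr) simp
  interpret PA: prob_space PA unfolding PA_def by (rule prob_space_distr) simp
  interpret PA\<mu>: pair_prob_space PA \<mu> ..
  note [measurable] = is_cond_prob_measurable[OF r]
  have [measurable_cong]: "sets \<mu> = sets MZ" "sets (PA \<Otimes>\<^sub>M \<mu>) = sets (count_space UNIV \<Otimes>\<^sub>M MZ)"
    by (simp_all add: \<mu>_def PA_def sets_pair_measure_cong)
  have r01: "0 \<le> r z" "r z \<le> 1" for z
    using is_cond_prob_nonneg[OF r] is_cond_prob_le_1[OF r] by auto
  have p01: "0 < p" "p < 1" using p by (simp_all add: p_def)
  have F_bound: "\<bar>F a z\<bar> \<le> B" for a z
    unfolding F_def B_def by (rule abs_likelihood_ratio_mult_log_le[OF b_gt_1 p01 r01])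
  have [measurable]: "(\<lambda>(a, z). F a z) \<in> borel_measurable (count_space UNIV \<Otimes>\<^sub>M MZ)"
    "F a \<in> borel_measurable MZ" for a
    unfolding F_def likelihood_ratio_def by measurable
  have int_F: "integrable (PA \<Otimes>\<^sub>M \<mu>) (\<lambda>(a, z). F a z)"
    by (rule finite_measure.integrable_const_bound[OF PA\<mu>.P.finite_measure_axioms, where B=B])
      (simp_all add: F_bound split_beta')
  have int_F_z: "integrable \<mu> (F a)" for a
    by (rule \<mu>.integrable_const_bound[where B=B]) (simp_all add: F_bound)
  have pointwise: "p * F True z + (1 - p) * F False z
      = - bin_entropy b (r z) - log b (1 - p) - (log b p - log b (1 - p)) * r z" for z
    unfolding F_def by (rule likelihood_ratio_log_mean[OF p01 r01])
  have int_r: "integrable \<mu> r"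
    using r01 by (intro \<mu>.integrable_const_bound[where B=1]) simp_all
  have "mutual_information b (count_space UNIV) MZ A Z
      = KL_divergence b (PA \<Otimes>\<^sub>M \<mu>) (density (PA \<Otimes>\<^sub>M \<mu>) (\<lambda>(a, z). likelihood_ratio p (r z) a))"
    using distr_pair_bool_swap_eq_density[OF Z A r p]
    by (simp add: mutual_information_def \<mu>_def PA_def p_def split_beta')
  also have "\<dots> = (\<integral>x. (\<lambda>(a, z). F a z) x \<partial>(PA \<Otimes>\<^sub>M \<mu>))"
    unfolding F_def
    using p r01
    by (subst PA\<mu>.KL_density[OF b_gt_1])
      (auto simp: likelihood_ratio_def split_beta' p_def intro!: AE_I2 divide_nonneg_pos)
  also have "\<dots> = (\<integral>a. (\<integral>z. F a z \<partial>\<mu>) \<partial>PA)"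
    by (rule PA\<mu>.integral_fst[OF int_F, symmetric])
  also have "\<dots> = p * (\<integral>z. F True z \<partial>\<mu>) + (1 - p) * (\<integral>z. F False z \<partial>\<mu>)"
    by (simp add: PA_def integral_distr_bool prob_neg p_def)
  also have "\<dots> = (\<integral>z. - bin_entropy b (r z) - log b (1 - p) - (log b p - log b (1 - p)) * r z \<partial>\<mu>)"
    using int_F_z by (simp add: pointwise[symmetric])
  also have "\<dots> = - (\<integral>z. bin_entropy b (r z) \<partial>\<mu>) - log b (1 - p) - (log b p - log b (1 - p)) * p"
    using integrable_bin_entropy_cond_prob[OF Z r b_gt_1, folded \<mu>_def] int_r
      integral_cond_prob[OF Z A r, folded \<mu>_def p_def]
    by (simp add: \<mu>.prob_space)
  also have "\<dots> = bin_entropy b p - (\<integral>z. bin_entropy b (r z) \<partial>\<mu>)"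
    by (simp add: bin_entropy_def algebra_simps)
  finally show ?thesis by (simp add: p_def \<mu>_def)
qed

lemma (in prob_space) AE_eq_if_cond_prob_0_1:
  assumes [measurable]: "Z \<in> M \<rightarrow>\<^sub>M MZ" "Y \<in> M \<rightarrow>\<^sub>M count_space UNIV"
    and r: "is_cond_prob M MZ Z Y r" and r01: "AE z in distr M MZ Z. r z = 0 \<or> r z = 1"
  shows "AE \<omega> in M. Y \<omega> = (1 / 2 \<le> r (Z \<omega>))"
proof -
  note [measurable] = is_cond_prob_measurable[OF r]
  define E where "E = {z\<in>space MZ. 1 / 2 \<le> r z}"
  have [measurable]: "E \<in> sets MZ" unfolding E_def by measurable
  have "(\<integral>\<^sup>+\<omega>. indicator {\<omega>\<in>space M. Y \<omega> \<noteq> (1 / 2 \<le> r (Z \<omega>))} \<omega> \<partial>M)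
      = (\<integral>\<^sup>+\<omega>. indicator {\<omega>\<in>space M. Y \<omega> = True} \<omega> * indicator (space MZ - E) (Z \<omega>)
          + indicator {\<omega>\<in>space M. Y \<omega> = False} \<omega> * indicator E (Z \<omega>) \<partial>M)"
    by (intro nn_integral_cong) (auto simp: E_def measurable_space[of Z M MZ] split: split_indicator)
  also have "\<dots> = (\<integral>\<^sup>+z. ennreal (r z) * indicator (space MZ - E) z
      + ennreal (1 - r z) * indicator E z \<partial>distr M MZ Z)"
    using is_cond_prob_nn_integral[OF r, of "indicator (space MZ - E)" True]
      is_cond_prob_nn_integral[OF r, of "indicator E" False]
    by (simp add: nn_integral_add)
  also have "\<dots> = (\<integral>\<^sup>+z. 0 \<partial>distr M MZ Z)"
    using r01 by (intro nn_integral_cong_AE) (auto simp: E_def split: split_indicator elim!: eventually_mono)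
  finally have "AE \<omega> in M. indicator {\<omega>\<in>space M. Y \<omega> \<noteq> (1 / 2 \<le> r (Z \<omega>))} \<omega> = (0 :: ennreal)"
    by (subst nn_integral_0_iff_AE[symmetric]) simp_all
  then show ?thesis
    using AE_space by eventually_elim (simp split: split_indicator_asm)
qed

lemma (in information_space) exists_AE_eq_comp_if_mutual_information_eq_entropy:
  fixes Y :: "'a \<Rightarrow> bool"
  assumes Z[measurable]: "Z \<in> M \<rightarrow>\<^sub>M MZ" and Y[measurable]: "Y \<in> M \<rightarrow>\<^sub>M count_space UNIV"
    and mi: "mutual_information b (count_space UNIV) MZ Y Z = entropy b (count_space UNIV) Y"
  obtains f where "f \<in> MZ \<rightarrow>\<^sub>M count_space UNIV" "AE \<omega> in M. Y \<omega> = f (Z \<omega>)"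
proof -
  have [measurable]: "{\<omega>\<in>space M. Y \<omega>} \<in> events" by measurable
  have "\<P>(\<omega> in M. Y \<omega>) = 0 \<or> \<P>(\<omega> in M. Y \<omega>) = 1 \<or> 0 < \<P>(\<omega> in M. Y \<omega>) \<and> \<P>(\<omega> in M. Y \<omega>) < 1"
    using measure_nonneg[of M "{\<omega>\<in>space M. Y \<omega>}"] prob_le_1[of "{\<omega>\<in>space M. Y \<omega>}"] by linarith
  then consider "\<P>(\<omega> in M. Y \<omega>) = 0" | "\<P>(\<omega> in M. \<not> Y \<omega>) = 0"
    | "0 < \<P>(\<omega> in M. Y \<omega>)" "\<P>(\<omega> in M. Y \<omega>) < 1"
    using prob_neg[of Y] by auto
  then show ?thesis
  proof cases
    case 1
    then have ae: "AE \<omega> in M. Y \<omega> = (\<lambda>_. False) (Z \<omega>)"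
      by (subst (asm) prob_eq_0) (auto elim: eventually_mono)
    show ?thesis by (rule that[OF _ ae]) measurable
  next
    case 2
    then have ae: "AE \<omega> in M. Y \<omega> = (\<lambda>_. True) (Z \<omega>)"
      by (subst (asm) prob_eq_0) (auto elim: eventually_mono)
    show ?thesis by (rule that[OF _ ae]) measurable
  next
    case 3
    obtain r where r: "is_cond_prob M MZ Z Y r" using is_cond_prob_exists[OF Z Y] by blast
    note [measurable] = is_cond_prob_measurable[OF r]
    have r01: "0 \<le> r z" "r z \<le> 1" for z
      using is_cond_prob_nonneg[OF r] is_cond_prob_le_1[OF r] by auto
    have "(\<integral>z. bin_entropy b (r z) \<partial>distr M MZ Z) = 0"
      using mi mutual_information_bool_eq[OF Z Y r 3] entropy_bool[OF Y] by simp
    moreover note integrable_bin_entropy_cond_prob[OF Z r b_gt_1]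
    moreover have "AE z in distr M MZ Z. 0 \<le> bin_entropy b (r z)"
      using r01 b_gt_1 by (intro AE_I2 bin_entropy_nonneg) auto
    ultimately have "AE z in distr M MZ Z. bin_entropy b (r z) = 0"
      using integral_nonneg_eq_0_iff_AE by blast
    then have "AE z in distr M MZ Z. r z = 0 \<or> r z = 1"
    proof (rule eventually_mono)
      fix z assume "bin_entropy b (r z) = 0"
      with bin_entropy_pos[OF b_gt_1, of "r z"] r01[of z] show "r z = 0 \<or> r z = 1" by force
    qed
    then have ae: "AE \<omega> in M. Y \<omega> = (1 / 2 \<le> r (Z \<omega>))"
      by (rule AE_eq_if_cond_prob_0_1[OF Z Y r])
    show ?thesis by (rule that[OF _ ae]) measurable
  qed
qed

section \<open>Bounds on the expected cross-entropy loss\<close>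

lemma truncated_mixture_ge:
  fixes u v :: ennreal and p H :: real
  assumes p: "0 < p" "p < 1" and H: "0 \<le> H" and mixture: "ennreal H \<le> ennreal p * u + ennreal (1 - p) * v"
  shows "ennreal H \<le> ennreal p * min u (v + ennreal (H / p)) + ennreal (1 - p) * min (u + ennreal (H / (1 - p))) v"
proof -
  have H_p: "ennreal p * ennreal (H / p) = ennreal H" "ennreal (1 - p) * ennreal (H / (1 - p)) = ennreal H"
    using p H by (simp_all add: ennreal_mult[symmetric])
  consider "min u (v + ennreal (H / p)) = u" "min (u + ennreal (H / (1 - p))) v = v"
    | "min u (v + ennreal (H / p)) = v + ennreal (H / p)"
    | "min (u + ennreal (H / (1 - p))) v = u + ennreal (H / (1 - p))"
    by (metis min_def)
  then show ?thesis
  proof cases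
    case 1
    then show ?thesis using mixture by simp
  next
    case 2
    then have "ennreal H \<le> ennreal p * min u (v + ennreal (H / p))" using H_p by (simp add: distrib_left)
    then show ?thesis by (simp add: add_increasing2)
  next
    case 3
    then have "ennreal H \<le> ennreal (1 - p) * min (u + ennreal (H / (1 - p))) v" using H_p by (simp add: distrib_left)
    then show ?thesis by (simp add: add_increasing)
  qed
qed

lemma (in prob_space) indep_mixture_lower_bound:
  fixes u v :: "'z \<Rightarrow> ennreal" and H :: real and A Y :: "'a \<Rightarrow> bool"
  assumes [measurable]: "Z \<in> M \<rightarrow>\<^sub>M MZ" "A \<in> M \<rightarrow>\<^sub>M count_space UNIV" "Y \<in> M \<rightarrow>\<^sub>M count_space UNIV"
    "u \<in> borel_measurable MZ" "v \<in> borel_measurable MZ"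
    and indep: "indep_pair M MZ Z (count_space UNIV) A"
    and p: "0 < \<P>(\<omega> in M. A \<omega>)" "\<P>(\<omega> in M. A \<omega>) < 1" and H: "0 \<le> H"
    and mixture: "\<And>z. z \<in> space MZ \<Longrightarrow>
      ennreal H \<le> ennreal \<P>(\<omega> in M. A \<omega>) * u z + ennreal (1 - \<P>(\<omega> in M. A \<omega>)) * v z"
  shows "ennreal (H * (cond_prob M Y A - cond_prob M Y (\<lambda>\<omega>. \<not> A \<omega>)))
    \<le> (\<integral>\<^sup>+\<omega>. (if Y \<omega> then u (Z \<omega>) else v (Z \<omega>)) \<partial>M)"
proof -
  define p where "p = \<P>(\<omega> in M. A \<omega>)"
  define a where "a = \<P>(\<omega> in M. Y \<omega> \<and> A \<omega>)"
  define c where "c = \<P>(\<omega> in M. Y \<omega> \<and> \<not> A \<omega>)"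
  define L where "L \<omega> = (if Y \<omega> then u (Z \<omega>) else v (Z \<omega>))" for \<omega>
  have p01: "0 < p" "p < 1" using p by (simp_all add: p_def)
  have not_A: "\<P>(\<omega> in M. \<not> A \<omega>) = 1 - p" unfolding p_def by (rule prob_neg) simp
  define m1 where "m1 z = min (u z) (v z + ennreal (H / p))" for z
  define m0 where "m0 z = min (u z + ennreal (H / (1 - p))) (v z)" for z
  have [measurable]: "m1 \<in> borel_measurable MZ" "m0 \<in> borel_measurable MZ"
    unfolding m1_def m0_def by measurable
  have H_p: "ennreal (H / p) * ennreal p = ennreal H"
    using p01 H by (simp add: ennreal_mult[symmetric])
  have m_mixture: "ennreal H \<le> ennreal p * m1 z + ennreal (1 - p) * m0 z" if "z \<in> space MZ" for z
    unfolding m1_def m0_def using p01 H mixture[OF that] by (intro truncated_mixture_ge) (simp_all add: p_def)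
  have "ennreal H = (\<integral>\<^sup>+\<omega>. ennreal H \<partial>M)" by (simp add: emeasure_space_1)
  also have "\<dots> \<le> (\<integral>\<^sup>+\<omega>. ennreal p * m1 (Z \<omega>) + ennreal (1 - p) * m0 (Z \<omega>) \<partial>M)"
    by (intro nn_integral_mono m_mixture measurable_space[of Z M MZ]) simp
  also have "\<dots> = (\<integral>\<^sup>+\<omega>. indicator {\<omega>\<in>space M. A \<omega> = True} \<omega> * m1 (Z \<omega>)
      + indicator {\<omega>\<in>space M. A \<omega> = False} \<omega> * m0 (Z \<omega>) \<partial>M)"
    using nn_integral_indep_pair_indicator[OF _ _ _ indep, of m1 True]
      nn_integral_indep_pair_indicator[OF _ _ _ indep, of m0 False] not_A
    by (simp add: nn_integral_add nn_integral_cmult p_def)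
  finally have "ennreal H + ennreal (H * a / p) \<le> (\<integral>\<^sup>+\<omega>. indicator {\<omega>\<in>space M. A \<omega> = True} \<omega> * m1 (Z \<omega>)
      + indicator {\<omega>\<in>space M. A \<omega> = False} \<omega> * m0 (Z \<omega>) + ennreal (H / p) * indicator {\<omega>\<in>space M. Y \<omega> \<and> A \<omega>} \<omega> \<partial>M)"
    using p01 H by (simp add: nn_integral_add nn_integral_cmult_indicator emeasure_eq_measure a_def
        ennreal_mult[symmetric] add_right_mono)
  also have "\<dots> \<le> (\<integral>\<^sup>+\<omega>. L \<omega> + ennreal (H / p) * indicator {\<omega>\<in>space M. A \<omega>} \<omega>
      + ennreal (H / (1 - p)) * indicator {\<omega>\<in>space M. Y \<omega> \<and> \<not> A \<omega>} \<omega> \<partial>M)"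
    by (intro nn_integral_mono)
      (auto simp: L_def m1_def m0_def indicator_def add_mono min.coboundedI1 min.coboundedI2)
  also have "\<dots> = (\<integral>\<^sup>+\<omega>. L \<omega> \<partial>M) + ennreal (H / p) * emeasure M {\<omega>\<in>space M. A \<omega>}
      + ennreal (H / (1 - p)) * emeasure M {\<omega>\<in>space M. Y \<omega> \<and> \<not> A \<omega>}"
    by (simp add: L_def nn_integral_add nn_integral_cmult_indicator)
  also have "\<dots> = (\<integral>\<^sup>+\<omega>. L \<omega> \<partial>M) + ennreal H + ennreal (H * c / (1 - p))"
    using p01 H H_p by (simp add: emeasure_eq_measure c_def flip: p_def ennreal_mult)
  finally have "ennreal (H * a / p) \<le> (\<integral>\<^sup>+\<omega>. L \<omega> \<partial>M) + ennreal (H * c / (1 - p))"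
    by (simp add: add.assoc)
  then have "ennreal (H * a / p) - ennreal (H * c / (1 - p)) \<le> (\<integral>\<^sup>+\<omega>. L \<omega> \<partial>M)"
    by (simp add: ennreal_minus_le_iff add.commute)
  moreover have "H * a / p - H * c / (1 - p) = H * (cond_prob M Y A - cond_prob M Y (\<lambda>\<omega>. \<not> A \<omega>))"
    by (simp add: cond_prob_def a_def c_def not_A p_def algebra_simps)
  ultimately show ?thesis
    using H p01 by (simp add: ennreal_minus L_def c_def)
qed

lemma (in prob_space) exp_loss_lower_bound_if_indep:
  fixes A Y :: "'a \<Rightarrow> bool"
  assumes b: "1 < b" and [measurable]: "Z \<in> M \<rightarrow>\<^sub>M MZ" "A \<in> M \<rightarrow>\<^sub>M count_space UNIV"
    "Y \<in> M \<rightarrow>\<^sub>M count_space UNIV"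
    and h: "h \<in> rand_predictors MZ" and indep: "indep_pair M MZ Z (count_space UNIV) A"
    and p: "0 < \<P>(\<omega> in M. A \<omega>)" "\<P>(\<omega> in M. A \<omega>) < 1"
  shows "ennreal (bin_entropy b \<P>(\<omega> in M. A \<omega>) * (cond_prob M Y A - cond_prob M Y (\<lambda>\<omega>. \<not> A \<omega>)))
    \<le> exp_loss M b Y Z h"
proof -
  have [measurable]: "h \<in> MZ \<rightarrow>\<^sub>M subprob_algebra borel"
    and h_prob: "\<And>z. z \<in> space MZ \<Longrightarrow> prob_space (h z)"
    using h unfolding rand_predictors_def by auto
  define u where "u z = (\<integral>\<^sup>+t. ce_loss b True t \<partial>h z)" for z
  define v where "v z = (\<integral>\<^sup>+t. ce_loss b False t \<partial>h z)" for z
  have [measurable]: "u \<in> borel_measurable MZ" "v \<in> borel_measurable MZ"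
    unfolding u_def v_def by (rule nn_integral_measurable_subprob_algebra2; measurable)+
  have "ennreal (bin_entropy b \<P>(\<omega> in M. A \<omega>) * (cond_prob M Y A - cond_prob M Y (\<lambda>\<omega>. \<not> A \<omega>)))
      \<le> (\<integral>\<^sup>+\<omega>. (if Y \<omega> then u (Z \<omega>) else v (Z \<omega>)) \<partial>M)"
  proof (rule indep_mixture_lower_bound[OF _ _ _ _ _ indep p])
    show "0 \<le> bin_entropy b \<P>(\<omega> in M. A \<omega>)"
      using p b by (intro bin_entropy_nonneg) simp_all
    show "ennreal (bin_entropy b \<P>(\<omega> in M. A \<omega>))
        \<le> ennreal \<P>(\<omega> in M. A \<omega>) * u z + ennreal (1 - \<P>(\<omega> in M. A \<omega>)) * v z"
      if "z \<in> space MZ" for z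
      unfolding u_def v_def
      using sets_kernel[of h MZ borel z] that
      by (intro bin_entropy_le_nn_integral_ce_loss[OF h_prob[OF that] _ p b]) simp
  qed simp_all
  also have "\<dots> = exp_loss M b Y Z h"
    unfolding exp_loss_def u_def v_def by (intro nn_integral_cong) simp
  finally show ?thesis .
qed

lemma (in prob_space) Delta_YA_mult_bin_entropy_le_exp_loss:
  fixes A Y :: "'a \<Rightarrow> bool"
  assumes b: "1 < b" and [measurable]: "Z \<in> M \<rightarrow>\<^sub>M MZ" "A \<in> M \<rightarrow>\<^sub>M count_space UNIV"
    "Y \<in> M \<rightarrow>\<^sub>M count_space UNIV"
    and h: "h \<in> rand_predictors MZ" and indep: "indep_pair M MZ Z (count_space UNIV) A"
    and p: "0 < \<P>(\<omega> in M. A \<omega>)" "\<P>(\<omega> in M. A \<omega>) < 1"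
  shows "ennreal (Delta_YA M A Y * bin_entropy b \<P>(\<omega> in M. A \<omega>)) \<le> exp_loss M b Y Z h"
proof -
  have not_A: "\<P>(\<omega> in M. \<not> A \<omega>) = 1 - \<P>(\<omega> in M. A \<omega>)" by (rule prob_neg) simp
  have "indep_pair M MZ Z (count_space UNIV) (\<lambda>\<omega>. \<not> A \<omega>)"
    by (rule indep_pair_compose[OF indep]) simp_all
  from exp_loss_lower_bound_if_indep[OF b _ _ _ h this]
  have "ennreal (bin_entropy b \<P>(\<omega> in M. A \<omega>) * (cond_prob M Y (\<lambda>\<omega>. \<not> A \<omega>) - cond_prob M Y A))
      \<le> exp_loss M b Y Z h"
    using p by (simp add: not_A bin_entropy_1_minus)
  moreover note exp_loss_lower_bound_if_indep[OF b _ _ _ h indep p]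
  ultimately show ?thesis
    by (cases "0 \<le> cond_prob M Y (\<lambda>\<omega>. \<not> A \<omega>) - cond_prob M Y A") (simp_all add: Delta_YA_def mult.commute)
qed

lemma (in information_space) Delta_YA_mult_entropy_le_exp_loss_if_mutual_information_eq_0:
  fixes A Y :: "'a \<Rightarrow> bool"
  assumes Z[measurable]: "Z \<in> M \<rightarrow>\<^sub>M MZ" and A[measurable]: "A \<in> M \<rightarrow>\<^sub>M count_space UNIV"
    and Y[measurable]: "Y \<in> M \<rightarrow>\<^sub>M count_space UNIV"
    and mi: "mutual_information b MZ (count_space UNIV) Z A = 0" and h: "h \<in> rand_predictors MZ"
  shows "ennreal (Delta_YA M A Y * entropy b (count_space UNIV) A) \<le> exp_loss M b Y Z h"
proof (cases "0 < \<P>(\<omega> in M. A \<omega>) \<and> \<P>(\<omega> in M. A \<omega>) < 1")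
  case True
  then have "indep_pair M MZ Z (count_space UNIV) A"
    by (intro indep_pair_if_mutual_information_eq_0[OF Z A _ _ mi]) simp_all
  with True show ?thesis
    using Delta_YA_mult_bin_entropy_le_exp_loss[OF b_gt_1 Z A Y h] by (simp add: entropy_bool)
next
  case False
  then have "\<P>(\<omega> in M. A \<omega>) = 0 \<or> \<P>(\<omega> in M. A \<omega>) = 1"
    using measure_nonneg[of M "{\<omega>\<in>space M. A \<omega>}"] prob_le_1[of "{\<omega>\<in>space M. A \<omega>}"] by linarith
  then show ?thesis by (auto simp: entropy_bool bin_entropy_def)
qed

lemma (in information_space) ce_loss_sum_eq_conditional_entropy:
  fixes A Y :: "'a \<Rightarrow> bool"
  assumes [measurable]: "A \<in> M \<rightarrow>\<^sub>M count_space UNIV" "Y \<in> M \<rightarrow>\<^sub>M count_space UNIV"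
  defines "P x \<equiv> \<P>(\<omega> in M. (A \<omega>, Y \<omega>) = x)"
  shows "(\<Sum>x\<in>UNIV. ce_loss b (fst x) (P (True, snd x) / (P (True, snd x) + P (False, snd x))) * ennreal (P x))
    = ennreal (conditional_entropy b (count_space UNIV) (count_space UNIV) A Y)"
proof -
  have P_nonneg: "0 \<le> P x" for x unfolding P_def by simp
  have P_Y: "\<P>(\<omega> in M. Y \<omega> = y) = P (True, y) + P (False, y)" for y
  proof -
    have "{\<omega>\<in>space M. Y \<omega> = y} = {\<omega>\<in>space M. (A \<omega>, Y \<omega>) = (True, y)} \<union> {\<omega>\<in>space M. (A \<omega>, Y \<omega>) = (False, y)}"
      by auto
    then show ?thesis unfolding P_def by (simp only:) (rule finite_measure_Union; auto)
  qed
  have "(\<Sum>x\<in>UNIV. ce_loss b (fst x) (P (True, snd x) / (P (True, snd x) + P (False, snd x))) * ennreal (P x))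
      = (\<Sum>x\<in>UNIV. ennreal (- (P x * log b (P x / \<P>(\<omega> in M. Y \<omega> = snd x)))))"
  proof (intro sum.cong refl)
    fix x :: "bool \<times> bool"
    obtain a y where x: "x = (a, y)" by (cases x)
    show "ce_loss b (fst x) (P (True, snd x) / (P (True, snd x) + P (False, snd x))) * ennreal (P x)
        = ennreal (- (P x * log b (P x / \<P>(\<omega> in M. Y \<omega> = snd x))))"
      using ce_loss_mult_eq[OF b_gt_1 P_nonneg[of "(True, y)"] P_nonneg[of "(False, y)"], of a]
      by (cases a) (simp_all add: x P_Y)
  qed
  also have "\<dots> = ennreal (- (\<Sum>x\<in>UNIV. P x * log b (P x / \<P>(\<omega> in M. Y \<omega> = snd x))))"
  proof -
    have "P x * log b (P x / \<P>(\<omega> in M. Y \<omega> = snd x)) \<le> 0" for x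
    proof (cases "P x = 0")
      case False
      obtain a y where x: "x = (a, y)" by (cases x)
      have "P x \<le> \<P>(\<omega> in M. Y \<omega> = snd x)"
        using P_Y[of y] P_nonneg[of "(True, y)"] P_nonneg[of "(False, y)"] x by (cases a) auto
      then show ?thesis
        using False P_nonneg[of x] b_gt_1 by (intro mult_nonneg_nonpos) simp_all
    qed simp
    then show ?thesis by (simp add: sum_negf[symmetric] sum_nonneg)
  qed
  also have "\<dots> = ennreal (conditional_entropy b (count_space UNIV) (count_space UNIV) A Y)"
    by (simp add: conditional_entropy_bool P_def)
  finally show ?thesis .
qed

lemma (in information_space) exp_loss_le_conditional_entropy:
  fixes A Y :: "'a \<Rightarrow> bool"
  assumes [measurable]: "Z \<in> M \<rightarrow>\<^sub>M MZ" "A \<in> M \<rightarrow>\<^sub>M count_space UNIV" "Y \<in> M \<rightarrow>\<^sub>M count_space UNIV"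
    "f \<in> MZ \<rightarrow>\<^sub>M count_space UNIV" and Y_eq: "AE \<omega> in M. Y \<omega> = f (Z \<omega>)"
  shows "(\<Sqinter>h\<in>rand_predictors MZ. exp_loss M b A Z h)
    \<le> ennreal (conditional_entropy b (count_space UNIV) (count_space UNIV) A Y)"
proof -
  define P where "P x = \<P>(\<omega> in M. (A \<omega>, Y \<omega>) = x)" for x
  define c where "c y = P (True, y) / (P (True, y) + P (False, y))" for y
  define h where "h z = return borel (c (f z))" for z
  have P_nonneg: "0 \<le> P x" for x unfolding P_def by simp
  have "0 \<le> c y" "c y \<le> 1" for y
    using P_nonneg[of "(True, y)"] P_nonneg[of "(False, y)"] unfolding c_def
    by (auto simp: divide_le_eq_1)
  then have h: "h \<in> rand_predictors MZ"
    unfolding rand_predictors_def h_def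
    by (auto intro!: measurable_compose[OF _ return_measurable] prob_space_return)
  have "exp_loss M b A Z h = (\<integral>\<^sup>+\<omega>. ce_loss b (A \<omega>) (c (Y \<omega>)) \<partial>M)"
    unfolding exp_loss_def h_def using Y_eq
    by (intro nn_integral_cong_AE) (auto simp: nn_integral_return elim!: eventually_mono)
  also have "\<dots> = (\<Sum>x\<in>UNIV. ce_loss b (fst x) (c (snd x)) * ennreal (P x))"
    using nn_integral_finite_rv[OF measurable_Pair_count_space_finite, of A Y "\<lambda>x. ce_loss b (fst x) (c (snd x))"]
    by (simp add: P_def)
  also have "\<dots> = ennreal (conditional_entropy b (count_space UNIV) (count_space UNIV) A Y)"
    unfolding c_def P_def by (rule ce_loss_sum_eq_conditional_entropy) simp_all
  finally show ?thesis using h by (metis INF_lower order_refl)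
qed

theorem corollary1:
  fixes M :: "'w measure" and b :: real
    and MX :: "'x measure" and MS :: "'s measure" and MZ :: "'z measure"
    and X :: "'w \<Rightarrow> 'x" and S :: "'w \<Rightarrow> 's" and A Y :: "'w \<Rightarrow> bool"
    and fA fY :: "'x \<Rightarrow> bool" and g :: "'x \<times> 's \<Rightarrow> 'z" and Z :: "'w \<Rightarrow> 'z"
  assumes info: "information_space M b"
    and X_meas: "X \<in> M \<rightarrow>\<^sub>M MX"
    and S_meas: "S \<in> M \<rightarrow>\<^sub>M MS"
    and fA_meas: "fA \<in> MX \<rightarrow>\<^sub>M count_space UNIV"
    and fY_meas: "fY \<in> MX \<rightarrow>\<^sub>M count_space UNIV"
    and A_def: "\<forall>\<omega>\<in>space M. A \<omega> = fA (X \<omega>)"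
    and Y_def: "\<forall>\<omega>\<in>space M. Y \<omega> = fY (X \<omega>)"
    and S_indep: "prob_space.indep_set M
                    {(\<lambda>\<omega>. (X \<omega>, A \<omega>, Y \<omega>)) -` B \<inter> space M | B.
                       B \<in> sets (MX \<Otimes>\<^sub>M (count_space UNIV \<Otimes>\<^sub>M count_space UNIV))}
                    {S -` B \<inter> space M | B. B \<in> sets MS}"
    and g_meas: "g \<in> MX \<Otimes>\<^sub>M MS \<rightarrow>\<^sub>M MZ"
    and Z_def: "\<forall>\<omega>\<in>space M. Z \<omega> = g (X \<omega>, S \<omega>)"
  shows "(prob_space.mutual_information M b MZ (count_space UNIV) Z A = 0 \<longrightarrow>
            (\<Sqinter>h\<in>rand_predictors MZ. exp_loss M b Y Z h)
              \<ge> ennreal (Delta_YA M A Y * prob_space.entropy M b (count_space UNIV) A))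
       \<and> (prob_space.mutual_information M b (count_space UNIV) MZ Y Z
              = prob_space.entropy M b (count_space UNIV) Y \<longrightarrow>
            (\<Sqinter>h\<in>rand_predictors MZ. exp_loss M b A Z h)
              \<le> ennreal (prob_space.conditional_entropy M b (count_space UNIV) (count_space UNIV) A Y))"
proof -
  interpret information_space M b by fact
  have A: "A \<in> M \<rightarrow>\<^sub>M count_space UNIV"
    by (rule measurable_cong[THEN iffD2, OF _ measurable_compose[OF X_meas fA_meas]]) (simp add: A_def)
  have Y: "Y \<in> M \<rightarrow>\<^sub>M count_space UNIV"
    by (rule measurable_cong[THEN iffD2, OF _ measurable_compose[OF X_meas fY_meas]]) (simp add: Y_def)
  have Z: "Z \<in> M \<rightarrow>\<^sub>M MZ"
    by (rule measurable_cong[THEN iffD2, OF _ measurable_compose[OF measurable_Pair[OF X_meas S_meas] g_meas]])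
      (simp add: Z_def)
  have "(\<Sqinter>h\<in>rand_predictors MZ. exp_loss M b A Z h)
      \<le> ennreal (conditional_entropy b (count_space UNIV) (count_space UNIV) A Y)"
    if "mutual_information b (count_space UNIV) MZ Y Z = entropy b (count_space UNIV) Y"
    using exists_AE_eq_comp_if_mutual_information_eq_entropy[OF Z Y that]
      exp_loss_le_conditional_entropy[OF Z A Y] by blast
  then show ?thesis
    using Delta_YA_mult_entropy_le_exp_loss_if_mutual_information_eq_0[OF Z A Y]
    by (auto intro: INF_greatest)
qed

end
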